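(* Let $H$ be a real Hilbert space, let $D\subseteq H$ be a nonempty closed convex set, and let $T_1,\dots,T_m:D\to D$ be firmly nonexpansive operators with $F:=\bigcap_{i=1}^m\mathrm{Fix}(T_i)\neq\emptyset$. Let $\mathcal{M}'$ be a finite nonempty subset of $\mathcal{M}$, enumerated as $S_1,\dots,S_N$ with $N=|\mathcal{M}'|$ and $S_r=(\Omega_r,w_r)$. Let $j(k)=(k \bmod N)+1$ for $k\ge0$, let $(\lambda_k)_{k\in\mathbb{N}}$ be a steering sequence, and let $u,x^0\in D$. Then the sequence defined by $$x^{k+1}=\lambda_k u+(1-\lambda_k)\sum_{t\in\Omega_{j(k)}}w_{j(k)}(t)T[t](x^k),\quad k\ge0,$$ converges strongly to $P_F(u)$.
   Context: An operator $T:D\to H$ is firmly nonexpansive if $\|T(x)-T(y)\|^2\le\langle x-y,T(x)-T(y)\rangle$ for all $x,y\in D$. $\mathrm{Fix}(T)=\{x\in D: T(x)=x\}$; $P_F$ is the metric projection onto $F$. An index vector is a finite tuple $t=(t_1,\dots,t_q)$ with each $t_\ell\in\{1,\dots,m\}$; the string operator is $T[t]:=T_{t_q}T_{t_{q-1}}\cdots T_{t_1}$. A finite set $\Omega$ of index vectors is fit if every $i\in\{1,\dots,m\}$ appears as a component of some $t\in\Omega$. $\mathcal{M}$ denotes the collection of all pairs $(\Omega,w)$ where $\Omega$ is a fit finite set of index vectors and $w:\Omega\to(0,1]$ satisfies $\sum_{t\in\Omega}w(t)=1$. A steering sequence is a real sequence $(\lambda_k)_{k\in\mathbb{N}}$ with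 $\lambda_k\in[0,1]$ for all $k$, $\lim_{k\to\infty}\lambda_k=0$, $\sum_{k=0}^\infty\lambda_k=+\infty$, and $\sum_{k=0}^\infty|\lambda_{k+1}-\lambda_k|<\infty$. *)

theory Defs
  imports "HOL-Analysis.Analysis"
begin

definition firmly_nonexpansive_on :: "'a::real_inner set \<Rightarrow> ('a \<Rightarrow> 'a) \<Rightarrow> bool" where
  "firmly_nonexpansive_on D T \<longleftrightarrow>
     (\<forall>x\<in>D. \<forall>y\<in>D. (norm (T x - T y))\<^sup>2 \<le> inner (x - y) (T x - T y))"

definition Fix :: "'a set \<Rightarrow> ('a \<Rightarrow> 'a) \<Rightarrow> 'a set" where
  "Fix D T = {x\<in>D. T x = x}"

text \<open>Metric projection onto F (a nearest point; unique and existing for F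
  nonempty closed convex in a Hilbert space). Same as the library's closest_point,
  which however is restricted to heine_borel spaces.\<close>
definition metric_proj :: "'a::real_inner set \<Rightarrow> 'a \<Rightarrow> 'a" where
  "metric_proj F a = (SOME x. x \<in> F \<and> (\<forall>y\<in>F. dist a x \<le> dist a y))"

text \<open>Index vectors are lists t = [t_1,...,t_q] (q \<ge> 1) with entries in {1..m}.
  String operator T[t] = T_{t_q} \<circ> ... \<circ> T_{t_1}: T_{t_1} is applied first.\<close>
definition index_vector :: "nat \<Rightarrow> nat list \<Rightarrow> bool" where
  "index_vector m t \<longleftrightarrow> t \<noteq> [] \<and> set t \<subseteq> {1..m}"

definition string_op :: "(nat \<Rightarrow> 'a \<Rightarrow> 'a) \<Rightarrow> nat list \<Rightarrow> 'a \<Rightarrow> 'a" where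
  "string_op T t x = fold (\<lambda>i y. T i y) t x"

definition fit :: "nat \<Rightarrow> nat list set \<Rightarrow> bool" where
  "fit m \<Omega> \<longleftrightarrow> finite \<Omega> \<and> (\<forall>t\<in>\<Omega>. index_vector m t) \<and> (\<forall>i\<in>{1..m}. \<exists>t\<in>\<Omega>. i \<in> set t)"

definition calM :: "nat \<Rightarrow> (nat list set \<times> (nat list \<Rightarrow> real)) set" where
  "calM m = {(\<Omega>, w). fit m \<Omega> \<and> (\<forall>t\<in>\<Omega>. 0 < w t \<and> w t \<le> 1) \<and> (\<Sum>t\<in>\<Omega>. w t) = 1}"

definition steering_sequence :: "(nat \<Rightarrow> real) \<Rightarrow> bool" where
  "steering_sequence lam \<longleftrightarrow>
     (\<forall>k. 0 \<le> lam k \<and> lam k \<le> 1) \<and> lam \<longlonglongrightarrow> 0 \<and>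
     \<not> summable lam \<and> summable (\<lambda>k. \<bar>lam (Suc k) - lam k\<bar>)"

end

theory Submission
  imports Defs
begin

text \<open>Let p be the projection of u onto the common fixed point set F. A block operator, a convex
  combination of string operators, decreases the squared distance to p, and this decrease d controls
  both its displacement and, since its index set is fit, the residual of every T i. With
  s k = norm (x k - p)^2 the iteration satisfies
  s (k+1) <= (1 - lam k) (s k - d k) + 2 lam k <u - p, x (k+1) - p>.
  When d k is small, x (k+1) is nearly a common fixed point. The closed convex hulls of tails of such
  iterates meet in a common fixed point (this replaces weak cluster points and demiclosedness), so the
  variational inequality <u - p, q - p> <= 0 for q in F makes the inner product eventually small,
  and lam k -> 0 together with the divergence of the sum of the lam k forces s k -> 0.\<close>

section \<open>Hilbert space geometry\<close>

lemma parallelogram_law_midpoint: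
  fixes a b :: "'a::real_inner"
  shows "(norm (a - b))\<^sup>2 = 2 * (norm a)\<^sup>2 + 2 * (norm b)\<^sup>2 - 4 * (norm ((1/2) *\<^sub>R (a + b)))\<^sup>2"
  by (simp add: power2_norm_eq_inner inner_commute algebra_simps)

lemma convex_near_minimal_norm_diff:
  fixes a b :: "'a::real_inner"
  assumes "convex K" "a \<in> K" "b \<in> K" "\<And>z. z \<in> K \<Longrightarrow> d \<le> norm z" "0 \<le> d"
    and "norm a \<le> r" "norm b \<le> r"
  shows "(norm (a - b))\<^sup>2 \<le> 4 * (r\<^sup>2 - d\<^sup>2)"
proof -
  have "(1/2) *\<^sub>R (a + b) = (1 - 1/2) *\<^sub>R a + (1/2) *\<^sub>R b" by (simp add: algebra_simps)
  also have "\<dots> \<in> K" using assms(1-3) by (intro convexD) auto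
  finally have "d \<le> norm ((1/2) *\<^sub>R (a + b))" by (rule assms(4))
  then have "d\<^sup>2 \<le> (norm ((1/2) *\<^sub>R (a + b)))\<^sup>2" using assms(5) by (intro power_mono)
  moreover have "(norm a)\<^sup>2 \<le> r\<^sup>2" "(norm b)\<^sup>2 \<le> r\<^sup>2" using assms(6,7) by (auto intro: power_mono)
  ultimately show ?thesis unfolding parallelogram_law_midpoint[of a b] right_diff_distrib by linarith
qed

lemma Cauchy_nested_convex_near_minimizers:
  fixes z :: "nat \<Rightarrow> 'a::real_inner"
  assumes convex: "\<And>n. convex (A n)" and decseq: "\<And>n. A (Suc n) \<subseteq> A n" and z: "\<And>n. z n \<in> A n"
    and lower: "\<And>n w. w \<in> A n \<Longrightarrow> d n \<le> norm w" and d_nonneg: "\<And>n. 0 \<le> d n"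
    and d_lim: "d \<longlonglongrightarrow> \<mu>" and z_norm: "\<And>n. norm (z n) \<le> \<mu> + 1 / Suc n"
  shows "Cauchy z"
proof (rule metric_CauchyI)
  fix e :: real assume "e > 0"
  define g where "g n = 4 * ((\<mu> + 1 / Suc n)\<^sup>2 - (d n)\<^sup>2)" for n
  have "g \<longlonglongrightarrow> 4 * ((\<mu> + 0)\<^sup>2 - \<mu>\<^sup>2)"
    unfolding g_def using LIMSEQ_inverse_real_of_nat
    by (intro tendsto_intros d_lim) (simp add: inverse_eq_divide)
  then have "\<forall>\<^sub>F n in sequentially. g n < e\<^sup>2" using \<open>e > 0\<close> by (intro order_tendstoD(2)) auto
  then obtain M where M: "\<And>n. n \<ge> M \<Longrightarrow> g n < e\<^sup>2" unfolding eventually_at_top_linorder by blast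
  have z_close: "(dist (z n) (z n'))\<^sup>2 \<le> g n" if "n \<le> n'" for n n'
  proof -
    have "A n' \<subseteq> A n" using that by (induction rule: dec_induct) (use decseq in auto)
    moreover have "1 / real (Suc n') \<le> 1 / Suc n" using that by (simp add: frac_le)
    then have "norm (z n') \<le> \<mu> + 1 / Suc n" using z_norm[of n'] by linarith
    ultimately show ?thesis unfolding g_def dist_norm using z d_nonneg lower z_norm[of n]
      by (intro convex_near_minimal_norm_diff[OF convex[of n]]) auto
  qed
  have "dist (z a) (z b) < e" if "a \<ge> M" "b \<ge> M" for a b
  proof -
    have "(dist (z a) (z b))\<^sup>2 < e\<^sup>2"
      using z_close[of a b] z_close[of b a] M that by (cases "a \<le> b") (force simp: dist_commute)+
    then show ?thesis using \<open>e > 0\<close> by (simp add: power_less_imp_less_base)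
  qed
  then show "\<exists>M. \<forall>m\<ge>M. \<forall>n\<ge>M. dist (z m) (z n) < e" by blast
qed

lemma closed_convex_bounded_nest:
  fixes A :: "nat \<Rightarrow> 'a::{real_inner,complete_space} set"
  assumes closed: "\<And>n. closed (A n)" and convex: "\<And>n. convex (A n)"
    and nonempty: "\<And>n. A n \<noteq> {}" and decseq: "\<And>n. A (Suc n) \<subseteq> A n"
    and bounded: "\<And>n z. z \<in> A n \<Longrightarrow> norm z \<le> B"
  shows "\<exists>c. \<forall>n. c \<in> A n"
proof -
  define d where "d n = Inf (norm ` A n)" for n
  have d_le: "d n \<le> norm z" if "z \<in> A n" for n z
    unfolding d_def using that by (intro cInf_lower) (auto intro: bdd_belowI[of _ 0])
  have "incseq d"
  proof (rule incseq_SucI)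
    fix n show "d n \<le> d (Suc n)"
      unfolding d_def[of "Suc n"] using nonempty[of "Suc n"] decseq[of n]
      by (intro cInf_greatest) (auto intro: d_le)
  qed
  moreover have "bdd_above (range d)"
  proof (rule bdd_aboveI[of _ B], clarify)
    fix n obtain z where "z \<in> A n" using nonempty[of n] by blast
    then show "d n \<le> B" using d_le bounded by (meson order_trans)
  qed
  ultimately have d_lim: "d \<longlonglongrightarrow> (SUP n. d n)" and d_le_sup: "\<And>n. d n \<le> (SUP n. d n)"
    by (auto intro: LIMSEQ_incseq_SUP cSUP_upper)
  obtain z where z_in: "\<And>n. z n \<in> A n" and z_norm: "\<And>n. norm (z n) < d n + 1 / Suc n"
  proof -
    have "\<exists>z \<in> A n. norm z < d n + 1 / Suc n" for n
      using cInf_lessD[of "norm ` A n" "d n + 1 / Suc n"] nonempty[of n] by (auto simp: d_def)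
    then show ?thesis using that by metis
  qed
  have "Cauchy z"
  proof (rule Cauchy_nested_convex_near_minimizers[where A = A and d = d and \<mu> = "SUP n. d n"])
    show "0 \<le> d n" for n unfolding d_def using nonempty[of n] by (intro cInf_greatest) auto
    show "norm (z n) \<le> (SUP n. d n) + 1 / Suc n" for n using z_norm[of n] d_le_sup[of n] by linarith
  qed (use convex decseq z_in d_le d_lim in auto)
  then obtain c where c: "z \<longlonglongrightarrow> c" using Cauchy_convergent_iff convergent_def by blast
  have "c \<in> A n" for n
  proof (rule Lim_in_closed_set[OF closed[of n] _ _ c])
    have A_mono: "A k \<subseteq> A n" if "n \<le> k" for k
      using that by (induction rule: dec_induct) (use decseq in auto)
    show "\<forall>\<^sub>F k in sequentially. z k \<in> A n"
      using eventually_ge_at_top[of n] by eventually_elim (use z_in A_mono in blast)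
  qed simp
  then show ?thesis by blast
qed

lemma metric_proj_nearest:
  fixes F :: "'a::{real_inner,complete_space} set"
  assumes "closed F" "convex F" "F \<noteq> {}"
  shows "metric_proj F u \<in> F" and "\<And>y. y \<in> F \<Longrightarrow> dist u (metric_proj F u) \<le> dist u y"
proof -
  define d where "d = Inf (dist u ` F)"
  have d_le: "d \<le> dist u y" if "y \<in> F" for y
    unfolding d_def using that by (intro cInf_lower) (auto intro: bdd_belowI[of _ 0])
  define A where "A n = F \<inter> cball u (d + 1 / Suc n)" for n
  have "\<exists>c. \<forall>n. c \<in> A n"
  proof (rule closed_convex_bounded_nest[where B = "norm u + d + 1"])
    fix n
    show "closed (A n)" "convex (A n)" unfolding A_def using assms by (auto intro: convex_Int)
    show "A n \<noteq> {}"
      using cInf_lessD[of "dist u ` F" "d + 1 / Suc n"] assms(3) by (auto simp: A_def d_def)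
    have "1 / real (Suc (Suc n)) \<le> 1 / Suc n" by (simp add: frac_le)
    then show "A (Suc n) \<subseteq> A n" unfolding A_def by auto
    fix z assume "z \<in> A n"
    then have "dist u z \<le> d + 1 / Suc n" unfolding A_def by auto
    moreover have "1 / real (Suc n) \<le> 1" by simp
    moreover have "norm z \<le> norm u + dist u z"
      by (metis dist_norm norm_triangle_sub norm_minus_commute)
    ultimately show "norm z \<le> norm u + d + 1" by linarith
  qed
  then obtain c where c: "\<And>n. c \<in> A n" by blast
  have "dist u c \<le> d"
  proof (rule field_le_epsilon)
    fix e :: real assume "e > 0"
    then obtain n where n: "inverse (real (Suc n)) < e" using reals_Archimedean by blast
    have "dist u c \<le> d + 1 / Suc n" using c[of n] unfolding A_def by auto
    then show "dist u c \<le> d + e" using n by (simp add: inverse_eq_divide)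
  qed
  then have "c \<in> F \<and> (\<forall>y\<in>F. dist u c \<le> dist u y)"
    using c[of 0] d_le unfolding A_def by (auto intro: order_trans)
  then have "metric_proj F u \<in> F \<and> (\<forall>y\<in>F. dist u (metric_proj F u) \<le> dist u y)"
    unfolding metric_proj_def by (rule someI)
  then show "metric_proj F u \<in> F" and "\<And>y. y \<in> F \<Longrightarrow> dist u (metric_proj F u) \<le> dist u y"
    by auto
qed

lemma metric_proj_inner_le:
  fixes F :: "'a::{real_inner,complete_space} set"
  assumes "closed F" "convex F" "F \<noteq> {}" "q \<in> F"
  shows "inner (u - metric_proj F u) (q - metric_proj F u) \<le> 0"
proof (rule ccontr)
  define p where "p = metric_proj F u"
  define c where "c = inner (u - p) (q - p)"
  define n where "n = (norm (q - p))\<^sup>2"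
  assume "\<not> ?thesis"
  then have c_pos: "c > 0" unfolding c_def p_def by simp
  define t where "t = min 1 (c / (n + 1))"
  have n_nonneg: "n \<ge> 0" unfolding n_def by simp
  have t: "0 < t" "t \<le> 1" unfolding t_def using c_pos n_nonneg by auto
  have "t * n \<le> c / (n + 1) * n" unfolding t_def using n_nonneg by (intro mult_right_mono) auto
  also have "\<dots> < c" using c_pos n_nonneg by (simp add: field_simps)
  finally have tn: "t * n < c" .
  have "(1 - t) *\<^sub>R p + t *\<^sub>R q \<in> F"
    using assms metric_proj_nearest(1)[OF assms(1-3)] t unfolding p_def by (intro convexD) auto
  then have "(norm (u - p))\<^sup>2 \<le> (norm (u - ((1 - t) *\<^sub>R p + t *\<^sub>R q)))\<^sup>2"
    using metric_proj_nearest(2)[OF assms(1-3)] unfolding p_def by (simp add: dist_norm power_mono)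
  also have "u - ((1 - t) *\<^sub>R p + t *\<^sub>R q) = (u - p) - t *\<^sub>R (q - p)" by (simp add: algebra_simps)
  also have "(norm \<dots>)\<^sup>2 = (norm (u - p))\<^sup>2 - 2 * t * c + t\<^sup>2 * n"
    unfolding c_def n_def power2_norm_eq_inner
    by (simp add: inner_diff_left inner_diff_right inner_commute power2_eq_square)
  finally have "2 * c \<le> t * n" using t by (simp add: power2_eq_square)
  then show False using tn c_pos by linarith
qed

section \<open>Nonexpansive maps and their fixed points\<close>

lemma firmly_nonexpansive_on_imp_nonexpansive:
  assumes "firmly_nonexpansive_on D T" "x \<in> D" "y \<in> D"
  shows "norm (T x - T y) \<le> norm (x - y)"
proof -
  have "(norm (T x - T y))\<^sup>2 \<le> inner (x - y) (T x - T y)"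
    using assms unfolding firmly_nonexpansive_on_def by blast
  also have "\<dots> \<le> norm (x - y) * norm (T x - T y)" by (rule norm_cauchy_schwarz)
  finally show ?thesis
    by (cases "T x = T y") (auto simp: power2_eq_square mult_le_cancel_right)
qed

lemma firmly_nonexpansive_on_fixed_point_ineq:
  assumes "firmly_nonexpansive_on D T" "x \<in> D" "p \<in> D" "T p = p"
  shows "(norm (T x - p))\<^sup>2 + (norm (x - T x))\<^sup>2 \<le> (norm (x - p))\<^sup>2"
proof -
  have "(norm (T x - p))\<^sup>2 \<le> inner (x - p) (T x - p)"
    using assms unfolding firmly_nonexpansive_on_def by metis
  moreover have "(norm (x - p))\<^sup>2
      = (norm ((x - p) - (T x - p)))\<^sup>2 + 2 * inner (x - p) (T x - p) - (norm (T x - p))\<^sup>2"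
    by (simp add: power2_norm_eq_inner inner_diff_left inner_diff_right inner_commute)
  ultimately show ?thesis by simp
qed

lemma nonexpansive_residual_le:
  assumes nonexp: "\<And>a b. a \<in> D \<Longrightarrow> b \<in> D \<Longrightarrow> norm (T a - T b) \<le> norm (a - b)"
    and "x \<in> D" "y \<in> D"
  shows "norm (x - T x) \<le> 2 * norm (x - y) + norm (y - T y)"
proof -
  have "norm (x - T x) \<le> norm (x - y) + norm (y - T x)"
    by (rule norm_diff_triangle_le[where y = y]) auto
  moreover have "norm (y - T x) \<le> norm (y - T y) + norm (T y - T x)"
    by (rule norm_diff_triangle_le[where y = "T y"]) auto
  moreover have "norm (T y - T x) \<le> norm (x - y)"
    using nonexp[OF assms(3,2)] by (simp add: norm_minus_commute)
  ultimately show ?thesis by linarith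
qed

lemma norm_sq_convex_combination_identity:
  fixes a b :: "'a::real_inner"
  assumes "s + t = 1"
  shows "s * (norm (a + t *\<^sub>R b))\<^sup>2 + t * (norm (a - s *\<^sub>R b))\<^sup>2 = (norm a)\<^sup>2 + s * t * (norm b)\<^sup>2"
proof -
  have "s * (norm (a + t *\<^sub>R b))\<^sup>2 + t * (norm (a - s *\<^sub>R b))\<^sup>2
      = (s + t) * (norm a)\<^sup>2 + s * t * (s + t) * (norm b)\<^sup>2"
    unfolding power2_norm_eq_inner
    by (simp add: inner_commute algebra_simps power2_eq_square)
  then show ?thesis using assms by simp
qed

lemma convex_Fix_nonexpansive:
  fixes D :: "'a::real_inner set"
  assumes "convex D"
    and nonexp: "\<And>x y. x \<in> D \<Longrightarrow> y \<in> D \<Longrightarrow> norm (T x - T y) \<le> norm (x - y)"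
  shows "convex (Fix D T)"
proof (rule convexI)
  fix x y and s t :: real
  assume "x \<in> Fix D T" "y \<in> Fix D T" and st: "0 \<le> s" "0 \<le> t" "s + t = 1"
  then have x: "x \<in> D" "T x = x" and y: "y \<in> D" "T y = y" unfolding Fix_def by auto
  define z where "z = s *\<^sub>R x + t *\<^sub>R y"
  have z: "z \<in> D" unfolding z_def using assms(1) x y st by (intro convexD) auto
  have zx: "z - x = t *\<^sub>R (y - x)" and zy: "z - y = - (s *\<^sub>R (y - x))"
    using st(3) unfolding z_def by (auto simp: algebra_simps simp flip: scaleR_add_left)
  have "norm (T z - x) \<le> t * norm (y - x)" using nonexp[OF z x(1)] x(2) zx st by simp
  then have Tzx: "(norm (T z - x))\<^sup>2 \<le> (t * norm (y - x))\<^sup>2" by (intro power_mono) auto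
  have "norm (T z - y) \<le> s * norm (y - x)" using nonexp[OF z y(1)] y(2) zy st by simp
  then have Tzy: "(norm (T z - y))\<^sup>2 \<le> (s * norm (y - x))\<^sup>2" by (intro power_mono) auto
  have "(norm (T z - z))\<^sup>2 + s * t * (norm (y - x))\<^sup>2
      = s * (norm ((T z - z) + t *\<^sub>R (y - x)))\<^sup>2 + t * (norm ((T z - z) - s *\<^sub>R (y - x)))\<^sup>2"
    by (rule norm_sq_convex_combination_identity[OF st(3), symmetric])
  also have "\<dots> = s * (norm (T z - x))\<^sup>2 + t * (norm (T z - y))\<^sup>2"
    using zx zy by (simp add: algebra_simps)
  also have "\<dots> \<le> s * (t * norm (y - x))\<^sup>2 + t * (s * norm (y - x))\<^sup>2"
    using Tzx Tzy st by (intro add_mono mult_left_mono) auto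
  also have "\<dots> = s * t * (s + t) * (norm (y - x))\<^sup>2" by (simp add: algebra_simps power2_eq_square)
  finally have "T z = z" using st(3) by simp
  then show "s *\<^sub>R x + t *\<^sub>R y \<in> Fix D T" using z unfolding Fix_def z_def by simp
qed

lemma closed_Fix_nonexpansive:
  assumes "closed D"
    and nonexp: "\<And>x y. x \<in> D \<Longrightarrow> y \<in> D \<Longrightarrow> norm (T x - T y) \<le> norm (x - y)"
  shows "closed (Fix D T)"
proof -
  have "continuous_on D T" unfolding continuous_on_iff
    using nonexp by (metis dist_norm le_less_trans)
  then have "closed {x \<in> D. T x - x = 0}"
    using assms(1) by (intro continuous_closed_preimage_constant continuous_intros)
  then show ?thesis unfolding Fix_def by simp
qed

lemma closure_convex_hull_subset:
  "S \<subseteq> C \<Longrightarrow> closed C \<Longrightarrow> convex C \<Longrightarrow> closure (convex hull S) \<subseteq> C"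
  by (intro closure_minimal hull_minimal) auto

lemma nonexpansive_inner_residual_le:
  fixes y c :: "'a::real_inner"
  assumes nonexp: "\<And>a b. a \<in> D \<Longrightarrow> b \<in> D \<Longrightarrow> norm (T a - T b) \<le> norm (a - b)"
    and "y \<in> D" "c \<in> D"
  shows "2 * inner (y - c) (c - T c) + (norm (c - T c))\<^sup>2
    \<le> (norm (y - T y))\<^sup>2 + 2 * norm (y - T y) * norm (y - c)"
proof -
  have "norm (y - T c) \<le> norm (y - T y) + norm (y - c)"
    using norm_diff_triangle_le[where y = "T y"] nonexp[OF assms(2,3)] by blast
  then have "(norm (y - T c))\<^sup>2 \<le> (norm (y - T y) + norm (y - c))\<^sup>2" by (intro power_mono) auto
  moreover have "(norm (y - T c))\<^sup>2 = (norm (y - c))\<^sup>2 + 2 * inner (y - c) (c - T c) + (norm (c - T c))\<^sup>2"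
    unfolding power2_norm_eq_inner by (simp add: inner_commute algebra_simps)
  ultimately show ?thesis by (simp add: power2_sum)
qed

lemma fixed_point_of_tail_hulls:
  fixes y :: "nat \<Rightarrow> 'a::real_inner"
  assumes nonexp: "\<And>a b. a \<in> D \<Longrightarrow> b \<in> D \<Longrightarrow> norm (T a - T b) \<le> norm (a - b)"
    and y: "\<And>n. y n \<in> D" and bounded: "\<And>n. norm (y n) \<le> B"
    and residual: "(\<lambda>n. norm (y n - T (y n))) \<longlonglongrightarrow> 0"
    and c: "c \<in> D" "\<And>N. c \<in> closure (convex hull (y ` {N..}))"
  shows "T c = c"
proof -
  define e where "e = c - T c"
  define h where "h n = (norm (y n - T (y n)))\<^sup>2 + 2 * norm (y n - T (y n)) * (B + norm c)" for n
  have "h \<longlonglongrightarrow> 0\<^sup>2 + 2 * 0 * (B + norm c)" unfolding h_def by (intro tendsto_intros residual)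
  then have h_lim: "h \<longlonglongrightarrow> 0" by simp
  have h_bound: "2 * inner (y n - c) e + (norm e)\<^sup>2 \<le> h n" for n
  proof -
    have "norm (y n - c) \<le> B + norm c"
      using bounded[of n] norm_triangle_ineq4[of "y n" c] by linarith
    then have "norm (y n - T (y n)) * norm (y n - c) \<le> norm (y n - T (y n)) * (B + norm c)"
      by (intro mult_left_mono) auto
    then show ?thesis
      using nonexpansive_inner_residual_le[OF nonexp y c(1), of n] unfolding h_def e_def by linarith
  qed
  have "(norm e)\<^sup>2 \<le> \<epsilon>" if "\<epsilon> > 0" for \<epsilon>
  proof -
    obtain N where N: "\<And>n. n \<ge> N \<Longrightarrow> h n < \<epsilon>"
      using order_tendstoD(2)[OF h_lim \<open>\<epsilon> > 0\<close>] unfolding eventually_at_top_linorder by blast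
    define K where "K = (\<epsilon> - (norm e)\<^sup>2) / 2 + inner e c"
    have "y ` {N..} \<subseteq> {z. inner e z \<le> K}"
    proof (rule image_subsetI)
      fix n assume "n \<in> {N..}"
      then have "2 * inner (y n - c) e + (norm e)\<^sup>2 \<le> \<epsilon>" using h_bound[of n] N[of n] by simp
      then show "y n \<in> {z. inner e z \<le> K}"
        unfolding K_def by (simp add: inner_diff_left inner_diff_right inner_commute field_simps)
    qed
    then have "c \<in> {z. inner e z \<le> K}"
      using c(2)[of N] closure_convex_hull_subset closed_halfspace_le convex_halfspace_le by blast
    then show ?thesis unfolding K_def by simp
  qed
  then have "(norm e)\<^sup>2 \<le> 0" by (meson dense not_le)
  then show ?thesis unfolding e_def by simp
qed

lemma asymptotic_fixed_points_halfspace: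
  fixes y :: "nat \<Rightarrow> 'a::{real_inner,complete_space}"
  assumes "closed D" "convex D"
    and nonexp: "\<And>i a b. i \<in> I \<Longrightarrow> a \<in> D \<Longrightarrow> b \<in> D \<Longrightarrow> norm (T i a - T i b) \<le> norm (a - b)"
    and y: "\<And>n. y n \<in> D" and bounded: "\<And>n. norm (y n) \<le> B"
    and residual: "\<And>i. i \<in> I \<Longrightarrow> (\<lambda>n. norm (y n - T i (y n))) \<longlonglongrightarrow> 0"
    and halfspace: "\<And>n. \<beta> \<le> inner v (y n)"
  shows "\<exists>c \<in> (\<Inter>i\<in>I. Fix D (T i)). \<beta> \<le> inner v c"
proof -
  define A where "A N = closure (convex hull (y ` {N..}))" for N
  have "\<exists>c. \<forall>N. c \<in> A N"
  proof (rule closed_convex_bounded_nest[where B = B])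
    fix N
    show "closed (A N)" "convex (A N)" "A N \<noteq> {}" unfolding A_def by auto
    show "A (Suc N) \<subseteq> A N" unfolding A_def by (intro closure_mono hull_mono image_mono) auto
    have "A N \<subseteq> cball 0 B" unfolding A_def using bounded by (intro closure_convex_hull_subset) auto
    then show "\<And>z. z \<in> A N \<Longrightarrow> norm z \<le> B" by auto
  qed
  then obtain c where c: "\<And>N. c \<in> A N" by blast
  have "A 0 \<subseteq> D" unfolding A_def using y assms(1,2) by (intro closure_convex_hull_subset) auto
  then have "c \<in> D" using c by blast
  moreover have "T i c = c" if "i \<in> I" for i
    using fixed_point_of_tail_hulls[OF nonexp[OF that] y bounded residual[OF that] \<open>c \<in> D\<close>] c
    unfolding A_def by blast
  moreover have "A 0 \<subseteq> {z. \<beta> \<le> inner v z}" unfolding A_def using halfspace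
    by (intro closure_convex_hull_subset) (auto intro: closed_halfspace_ge convex_halfspace_ge)
  then have "\<beta> \<le> inner v c" using c by blast
  ultimately show ?thesis unfolding Fix_def by blast
qed

section \<open>Real sequences with a vanishing, non-summable step size\<close>

lemma filterlim_partial_sums_at_top:
  fixes f :: "nat \<Rightarrow> real"
  assumes "\<And>n. 0 \<le> f n" "\<not> summable f"
  shows "filterlim (\<lambda>n. \<Sum>j<n. f j) at_top sequentially"
  unfolding filterlim_at_top
proof
  fix Z
  have "\<not> (\<forall>n. (\<Sum>j<n. f j) \<le> Z)" using assms summableI_nonneg_bounded[of f Z] by blast
  then obtain n0 where "Z \<le> (\<Sum>j<n0. f j)" by (meson nle_le)
  moreover have "incseq (\<lambda>n. \<Sum>j<n. f j)" using assms(1) by (intro incseq_SucI) simp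
  ultimately show "\<forall>\<^sub>F n in sequentially. Z \<le> (\<Sum>j<n. f j)"
    unfolding eventually_at_top_linorder incseq_def by (meson order_trans)
qed

lemma tendsto_0_of_nonsummable_contraction:
  fixes t lam :: "nat \<Rightarrow> real"
  assumes lam: "\<And>k. 0 \<le> lam k \<and> lam k \<le> 1" "\<not> summable lam"
    and t: "\<And>k. 0 \<le> t k" and contract: "\<And>k. k \<ge> K \<Longrightarrow> t (Suc k) \<le> (1 - lam k) * t k"
  shows "t \<longlonglongrightarrow> 0"
proof -
  define L where "L n = (\<Sum>j<n. lam (j + K))" for n
  have t_le: "t (n + K) \<le> t K * exp (- L n)" for n
  proof (induction n)
    case (Suc n)
    have "t (Suc n + K) \<le> (1 - lam (n + K)) * t (n + K)" using contract[of "n + K"] by simp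
    also have "\<dots> \<le> exp (- lam (n + K)) * (t K * exp (- L n))"
      using Suc lam(1)[of "n + K"] t[of "n + K"] exp_ge_add_one_self[of "- lam (n + K)"]
      by (intro mult_mono) auto
    also have "\<dots> = t K * exp (- L (Suc n))" unfolding L_def by (simp add: exp_add[symmetric] algebra_simps)
    finally show ?case .
  qed (simp add: L_def)
  have "filterlim L at_top sequentially"
    unfolding L_def using lam summable_iff_shift[of lam K] by (intro filterlim_partial_sums_at_top) auto
  then have "(\<lambda>n. t K * exp (- L n)) \<longlonglongrightarrow> t K * 0"
    by (intro tendsto_intros filterlim_compose[OF exp_at_bot]) (simp flip: filterlim_uminus_at_top)
  moreover have "\<forall>\<^sub>F n in sequentially. norm (t (n + K)) \<le> t K * exp (- L n)"
    using t t_le by simp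
  ultimately have "(\<lambda>n. t (n + K)) \<longlonglongrightarrow> 0" by (simp add: Lim_null_comparison)
  then show ?thesis by (rule LIMSEQ_offset)
qed

lemma threshold_excess_contracts:
  fixes l s s' d b \<epsilon> \<eta> R :: real
  assumes l: "0 \<le> l" "l \<le> 1" and s: "0 \<le> s" "s \<le> R" and "0 \<le> d" "b \<le> R" "0 \<le> \<epsilon>" "0 < \<eta>"
    and step: "s' \<le> (1 - l) * (s - d) + 2 * l * b"
    and l_small: "l * (\<eta> + 2 * R + 1) < \<eta> / 2"
    and b_small: "d \<le> \<eta> \<Longrightarrow> b \<le> \<epsilon>"
  shows "max (s' - 2 * \<epsilon>) 0 \<le> (1 - l) * max (s - 2 * \<epsilon>) 0"
proof (cases "d \<le> \<eta>")
  case True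
  have "l * b \<le> l * \<epsilon>" "0 \<le> (1 - l) * d" using b_small[OF True] l \<open>0 \<le> d\<close> by (auto intro: mult_left_mono)
  then have "s' - 2 * \<epsilon> \<le> (1 - l) * (s - 2 * \<epsilon>)" using step by (simp add: algebra_simps)
  also have "\<dots> \<le> (1 - l) * max (s - 2 * \<epsilon>) 0" using l by (intro mult_left_mono) auto
  finally show ?thesis using l by simp
next
  case False
  have expand: "(1 - l) * (s - d) + 2 * l * b = s - d - l * s + l * d + 2 * (l * b)"
    "l * (\<eta> + 2 * R + 1) = l * \<eta> + 2 * (l * R) + l" "(1 - l) * \<eta> = \<eta> - l * \<eta>" "(1 - l) * d = d - l * d"
    by (simp_all add: algebra_simps)
  have "(1 - l) * \<eta> \<le> (1 - l) * d" "l * b \<le> l * R" "0 \<le> l * s" "l * s \<le> l * R" "0 \<le> l * \<eta>"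
    using False l s \<open>b \<le> R\<close> \<open>0 < \<eta>\<close> by (auto intro: mult_left_mono)
  then have s': "s' < s - \<eta> / 2" using step l_small l unfolding expand by linarith
  show ?thesis
  proof (cases "s' \<le> 2 * \<epsilon>")
    case False
    then have "max (s - 2 * \<epsilon>) 0 = s - 2 * \<epsilon>" using s' \<open>0 < \<eta>\<close> by simp
    moreover have "l * (s - 2 * \<epsilon>) \<le> l * R" "0 \<le> l * R" using l s \<open>0 \<le> \<epsilon>\<close> by (auto intro: mult_left_mono)
    moreover have "(1 - l) * (s - 2 * \<epsilon>) = (s - 2 * \<epsilon>) - l * (s - 2 * \<epsilon>)" by (simp add: algebra_simps)
    ultimately show ?thesis using False s' l_small \<open>0 \<le> l * \<eta>\<close> l unfolding expand by linarith
  qed (use l in simp)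
qed

lemma halpern_real_sequence_tendsto_0:
  fixes s d b lam :: "nat \<Rightarrow> real"
  assumes lam: "\<And>k. 0 \<le> lam k \<and> lam k \<le> 1" "lam \<longlonglongrightarrow> 0" "\<not> summable lam"
    and s: "\<And>k. 0 \<le> s k" "\<And>k. s k \<le> R" and d: "\<And>k. 0 \<le> d k" and b: "\<And>k. b k \<le> R"
    and step: "\<And>k. s (Suc k) \<le> (1 - lam k) * (s k - d k) + 2 * lam k * b k"
    and b_small: "\<And>\<epsilon>. \<epsilon> > 0 \<Longrightarrow> \<exists>\<eta>>0. \<forall>\<^sub>F k in sequentially. d k \<le> \<eta> \<longrightarrow> b k \<le> \<epsilon>"
  shows "s \<longlonglongrightarrow> 0"
proof (rule tendstoI)
  fix e :: real assume "e > 0"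
  define \<epsilon> where "\<epsilon> = e / 3"
  have "\<epsilon> > 0" using \<open>e > 0\<close> unfolding \<epsilon>_def by simp
  then obtain \<eta> where "\<eta> > 0" and \<eta>: "\<forall>\<^sub>F k in sequentially. d k \<le> \<eta> \<longrightarrow> b k \<le> \<epsilon>"
    using b_small by blast
  have "(\<lambda>k. lam k * (\<eta> + 2 * R + 1)) \<longlonglongrightarrow> 0 * (\<eta> + 2 * R + 1)" by (intro tendsto_intros lam(2))
  then have "\<forall>\<^sub>F k in sequentially. lam k * (\<eta> + 2 * R + 1) < \<eta> / 2"
    using \<open>\<eta> > 0\<close> by (intro order_tendstoD(2)) auto
  with \<eta> have "\<forall>\<^sub>F k in sequentially. (d k \<le> \<eta> \<longrightarrow> b k \<le> \<epsilon>) \<and> lam k * (\<eta> + 2 * R + 1) < \<eta> / 2"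
    by (rule eventually_conj)
  then obtain K where K: "\<And>k. k \<ge> K \<Longrightarrow> (d k \<le> \<eta> \<longrightarrow> b k \<le> \<epsilon>) \<and> lam k * (\<eta> + 2 * R + 1) < \<eta> / 2"
    unfolding eventually_at_top_linorder by blast
  define t where "t k = max (s k - 2 * \<epsilon>) 0" for k
  have "t \<longlonglongrightarrow> 0"
  proof (rule tendsto_0_of_nonsummable_contraction[OF lam(1,3)])
    fix k assume "k \<ge> K"
    show "t (Suc k) \<le> (1 - lam k) * t k"
      unfolding t_def
    proof (rule threshold_excess_contracts[where d = "d k" and b = "b k" and R = R and \<eta> = \<eta>])
      show "lam k * (\<eta> + 2 * R + 1) < \<eta> / 2" "d k \<le> \<eta> \<Longrightarrow> b k \<le> \<epsilon>"
        using K[OF \<open>k \<ge> K\<close>] by auto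
    qed (use lam(1) s d b step \<open>\<epsilon> > 0\<close> \<open>\<eta> > 0\<close> in auto)
  qed (simp add: t_def)
  then have "\<forall>\<^sub>F k in sequentially. t k < \<epsilon>" using \<open>\<epsilon> > 0\<close> by (simp add: order_tendstoD)
  then show "\<forall>\<^sub>F k in sequentially. dist (s k) 0 < e"
  proof eventually_elim
    case (elim k)
    then have "s k - 2 * \<epsilon> < \<epsilon>" unfolding t_def by simp
    then show ?case using s(1)[of k] unfolding \<epsilon>_def by simp
  qed
qed

section \<open>String and block operators\<close>

lemma norm_le_add_imp_sq_le:
  fixes v :: "'a::real_normed_vector"
  assumes "norm v \<le> a + b"
  shows "(norm v)\<^sup>2 \<le> 2 * a\<^sup>2 + 2 * b\<^sup>2"
proof -
  have "(norm v)\<^sup>2 \<le> (a + b)\<^sup>2" using assms by (intro power_mono) auto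
  also have "\<dots> \<le> 2 * a\<^sup>2 + 2 * b\<^sup>2"
    using zero_le_power2[of "a - b"] by (simp add: power2_eq_square algebra_simps)
  finally show ?thesis .
qed

lemma norm_sq_sum_le_sum_norm_sq:
  fixes z :: "'b \<Rightarrow> 'a::real_normed_vector"
  assumes "finite A" "\<And>t. t \<in> A \<Longrightarrow> 0 \<le> w t" "sum w A = 1"
  shows "(norm (\<Sum>t\<in>A. w t *\<^sub>R z t))\<^sup>2 \<le> (\<Sum>t\<in>A. w t * (norm (z t))\<^sup>2)"
proof -
  have "norm (\<Sum>t\<in>A. w t *\<^sub>R z t) \<le> (\<Sum>t\<in>A. w t * norm (z t))"
    using assms(2) by (intro order_trans[OF norm_sum]) (simp add: sum_mono)
  then have "(norm (\<Sum>t\<in>A. w t *\<^sub>R z t))\<^sup>2 \<le> (\<Sum>t\<in>A. w t *\<^sub>R norm (z t))\<^sup>2"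
    by (intro power_mono) auto
  also have "\<dots> \<le> (\<Sum>t\<in>A. w t * (norm (z t))\<^sup>2)"
    using assms by (intro convex_on_sum[OF _ _ convex_power2]) auto
  finally show ?thesis .
qed

lemma sum_scaleR_minus_const:
  fixes z :: "'b \<Rightarrow> 'a::real_vector"
  assumes "sum w A = 1"
  shows "(\<Sum>t\<in>A. w t *\<^sub>R z t) - y = (\<Sum>t\<in>A. w t *\<^sub>R (z t - y))"
  by (simp add: assms scaleR_diff_right sum_subtractf flip: scaleR_sum_left)

lemma ten_pow_absorbs:
  fixes a g :: real
  assumes "0 \<le> a" "0 \<le> g"
  shows "8 * a + 2 * (10 ^ n * g) \<le> 10 * 10 ^ n * (a + g)"
proof -
  have "a \<le> 10 ^ n * a" using assms(1) by (simp add: mult_le_cancel_right1)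
  moreover have "0 \<le> 10 ^ n * g" using assms(2) by simp
  moreover have "10 * 10 ^ n * (a + g) = 10 * (10 ^ n * a) + 10 * (10 ^ n * g)"
    by (simp add: algebra_simps)
  ultimately show ?thesis using assms(1) by linarith
qed

lemma string_op_Nil [simp]: "string_op T [] x = x"
  unfolding string_op_def by simp

lemma string_op_Cons [simp]: "string_op T (i # t) x = string_op T t (T i x)"
  unfolding string_op_def by simp

definition block_op :: "(nat \<Rightarrow> 'a \<Rightarrow> 'a::real_vector) \<Rightarrow> nat list set \<times> (nat list \<Rightarrow> real) \<Rightarrow> 'a \<Rightarrow> 'a"
  where "block_op T S x = (\<Sum>t\<in>fst S. snd S t *\<^sub>R string_op T t x)"

text \<open>Each operator of a string costs a factor 10 in the string estimates below, enough to absorb the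
  constants of the triangle inequalities used there.\<close>

definition block_const :: "nat list set \<times> (nat list \<Rightarrow> real) \<Rightarrow> real"
  where "block_const S = (\<Sum>t\<in>fst S. 10 ^ length t / snd S t)"

lemma calM_memberD:
  assumes "S \<in> calM m"
  shows "finite (fst S)" and "sum (snd S) (fst S) = 1"
    and "\<And>t. t \<in> fst S \<Longrightarrow> 0 < snd S t" and "\<And>t. t \<in> fst S \<Longrightarrow> snd S t \<le> 1"
    and "\<And>t. t \<in> fst S \<Longrightarrow> set t \<subseteq> {1..m}" and "\<And>i. i \<in> {1..m} \<Longrightarrow> \<exists>t\<in>fst S. i \<in> set t"
  using assms unfolding calM_def fit_def index_vector_def by auto

lemma block_const_nonneg: "S \<in> calM m \<Longrightarrow> 0 \<le> block_const S"
  unfolding block_const_def using calM_memberD(3) by (intro sum_nonneg) (simp add: less_imp_le)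

locale firmly_nonexpansive_family =
  fixes D :: "'a::real_inner set" and T :: "nat \<Rightarrow> 'a \<Rightarrow> 'a" and m :: nat and p :: 'a
  assumes convex_D: "convex D"
    and maps_D: "\<And>i. i \<in> {1..m} \<Longrightarrow> T i ` D \<subseteq> D"
    and firm: "\<And>i. i \<in> {1..m} \<Longrightarrow> firmly_nonexpansive_on D (T i)"
    and p_in_D: "p \<in> D" and fixed_p: "\<And>i. i \<in> {1..m} \<Longrightarrow> T i p = p"
begin

definition descent :: "'a \<Rightarrow> 'a \<Rightarrow> real"
  where "descent x y = (norm (x - p))\<^sup>2 - (norm (y - p))\<^sup>2"

lemma T_in_D: "i \<in> {1..m} \<Longrightarrow> x \<in> D \<Longrightarrow> T i x \<in> D"
  using maps_D by blast

lemma nonexpansive: "i \<in> {1..m} \<Longrightarrow> a \<in> D \<Longrightarrow> b \<in> D \<Longrightarrow> norm (T i a - T i b) \<le> norm (a - b)"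
  using firmly_nonexpansive_on_imp_nonexpansive firm by blast

lemma string_op_in_D: "set t \<subseteq> {1..m} \<Longrightarrow> x \<in> D \<Longrightarrow> string_op T t x \<in> D"
  by (induction t arbitrary: x) (auto simp: T_in_D)

lemma descent_string_op_Cons:
  assumes "i \<in> {1..m}" "x \<in> D"
  shows "(norm (x - T i x))\<^sup>2 + descent (T i x) (string_op T t (T i x)) \<le> descent x (string_op T (i # t) x)"
  using firmly_nonexpansive_on_fixed_point_ineq[OF firm[OF assms(1)] assms(2) p_in_D fixed_p[OF assms(1)]]
  unfolding descent_def by simp

lemma descent_string_op_nonneg: "set t \<subseteq> {1..m} \<Longrightarrow> x \<in> D \<Longrightarrow> 0 \<le> descent x (string_op T t x)"
proof (induction t arbitrary: x)
  case (Cons i t)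
  then have "0 \<le> descent (T i x) (string_op T t (T i x))" by (simp add: T_in_D)
  moreover have "0 \<le> (norm (x - T i x))\<^sup>2" by simp
  moreover have "i \<in> {1..m}" using Cons.prems(1) by simp
  ultimately show ?case using descent_string_op_Cons[of i x t] Cons.prems(2) by linarith
qed (simp add: descent_def)

lemma string_op_displacement:
  "set t \<subseteq> {1..m} \<Longrightarrow> x \<in> D \<Longrightarrow> (norm (string_op T t x - x))\<^sup>2 \<le> 10 ^ length t * descent x (string_op T t x)"
proof (induction t arbitrary: x)
  case (Cons i t)
  define y where "y = T i x"
  define z where "z = string_op T t y"
  have i: "i \<in> {1..m}" and t: "set t \<subseteq> {1..m}" and y: "y \<in> D"
    using Cons.prems by (auto simp: y_def T_in_D)
  have "norm (z - x) \<le> norm (z - y) + norm (x - y)"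
    by (metis norm_diff_triangle_le norm_minus_commute order_refl)
  then have "(norm (z - x))\<^sup>2 \<le> 2 * (norm (z - y))\<^sup>2 + 2 * (norm (x - y))\<^sup>2"
    by (rule norm_le_add_imp_sq_le)
  also have "\<dots> \<le> 8 * (norm (x - y))\<^sup>2 + 2 * (10 ^ length t * descent y z)"
    using Cons.IH[OF t y] zero_le_power2[of "norm (x - y)"] unfolding z_def by linarith
  also have "\<dots> \<le> 10 ^ length (i # t) * ((norm (x - y))\<^sup>2 + descent y z)"
    using ten_pow_absorbs[OF zero_le_power2 descent_string_op_nonneg[OF t y]] unfolding z_def by simp
  also have "\<dots> \<le> 10 ^ length (i # t) * descent x (string_op T (i # t) x)"
    using descent_string_op_Cons[OF i Cons.prems(2)] unfolding y_def z_def by simp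
  finally show ?case unfolding y_def z_def by simp
qed (simp add: descent_def)

lemma string_op_residual:
  "set t \<subseteq> {1..m} \<Longrightarrow> x \<in> D \<Longrightarrow> j \<in> set t \<Longrightarrow>
    (norm (x - T j x))\<^sup>2 \<le> 10 ^ length t * descent x (string_op T t x)"
proof (induction t arbitrary: x)
  case (Cons i t)
  define y where "y = T i x"
  define g where "g = descent y (string_op T t y)"
  have i: "i \<in> {1..m}" and t: "set t \<subseteq> {1..m}" and y: "y \<in> D"
    using Cons.prems by (auto simp: y_def T_in_D)
  have g: "0 \<le> g" unfolding g_def by (rule descent_string_op_nonneg[OF t y])
  have "(norm (x - T j x))\<^sup>2 \<le> 8 * (norm (x - y))\<^sup>2 + 2 * (10 ^ length t * g)"
  proof (cases "j = i")
    case True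
    then show ?thesis using g by (simp add: y_def)
  next
    case False
    then have "j \<in> set t" "j \<in> {1..m}" using Cons.prems t by auto
    have "norm (x - T j x) \<le> 2 * norm (x - y) + norm (y - T j y)"
      by (rule nonexpansive_residual_le[OF nonexpansive[OF \<open>j \<in> {1..m}\<close>] Cons.prems(2) y])
    then have "(norm (x - T j x))\<^sup>2 \<le> 2 * (2 * norm (x - y))\<^sup>2 + 2 * (norm (y - T j y))\<^sup>2"
      by (rule norm_le_add_imp_sq_le)
    then show ?thesis
      using Cons.IH[OF t y \<open>j \<in> set t\<close>] unfolding g_def by (simp add: power_mult_distrib)
  qed
  also have "\<dots> \<le> 10 ^ length (i # t) * ((norm (x - y))\<^sup>2 + g)"
    using ten_pow_absorbs[OF zero_le_power2 g] by simp
  also have "\<dots> \<le> 10 ^ length (i # t) * descent x (string_op T (i # t) x)"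
    using descent_string_op_Cons[OF i Cons.prems(2)] unfolding y_def g_def by simp
  finally show ?case .
qed simp

context
  fixes S assumes S: "S \<in> calM m"
begin

lemma block_op_in_D: "x \<in> D \<Longrightarrow> block_op T S x \<in> D"
  unfolding block_op_def using calM_memberD[OF S] string_op_in_D
  by (intro convex_sum[OF _ convex_D]) (auto simp: less_imp_le)

lemma block_op_string_descent_le:
  assumes "x \<in> D" "t \<in> fst S"
  shows "snd S t * descent x (string_op T t x) \<le> descent x (block_op T S x)"
proof -
  note S_props = calM_memberD[OF S]
  have w_nonneg: "\<And>t. t \<in> fst S \<Longrightarrow> 0 \<le> snd S t" using S_props(3) by (simp add: less_imp_le)
  have "(norm (block_op T S x - p))\<^sup>2 \<le> (\<Sum>t\<in>fst S. snd S t * (norm (string_op T t x - p))\<^sup>2)"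
    unfolding block_op_def sum_scaleR_minus_const[OF S_props(2)]
    by (rule norm_sq_sum_le_sum_norm_sq[OF S_props(1) w_nonneg S_props(2)])
  moreover have "(norm (x - p))\<^sup>2 = (\<Sum>t\<in>fst S. snd S t * (norm (x - p))\<^sup>2)"
    by (simp add: S_props(2) flip: sum_distrib_right)
  ultimately have "(\<Sum>t\<in>fst S. snd S t * descent x (string_op T t x)) \<le> descent x (block_op T S x)"
    unfolding descent_def by (simp add: right_diff_distrib sum_subtractf)
  moreover have "snd S t * descent x (string_op T t x) \<le> (\<Sum>t\<in>fst S. snd S t * descent x (string_op T t x))"
    using assms S_props(1,5) w_nonneg descent_string_op_nonneg by (intro member_le_sum) auto
  ultimately show ?thesis by linarith
qed

lemma block_op_descent_nonneg: "x \<in> D \<Longrightarrow> 0 \<le> descent x (block_op T S x)"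
proof -
  assume x: "x \<in> D"
  obtain t where t: "t \<in> fst S" using calM_memberD(2)[OF S] by force
  have "0 \<le> snd S t * descent x (string_op T t x)"
    using calM_memberD(3,5)[OF S t] descent_string_op_nonneg[OF _ x] by simp
  then show ?thesis using block_op_string_descent_le[OF x t] by linarith
qed

lemma string_op_weighted_bound:
  assumes "x \<in> D" "t \<in> fst S"
  shows "10 ^ length t * descent x (string_op T t x) \<le> 10 ^ length t / snd S t * descent x (block_op T S x)"
  using block_op_string_descent_le[OF assms] calM_memberD(3)[OF S assms(2)] by (simp add: field_simps)

lemma block_op_displacement:
  assumes "x \<in> D"
  shows "(norm (block_op T S x - x))\<^sup>2 \<le> block_const S * descent x (block_op T S x)"
proof -
  note S_props = calM_memberD[OF S]
  have "(norm (block_op T S x - x))\<^sup>2 \<le> (\<Sum>t\<in>fst S. snd S t * (norm (string_op T t x - x))\<^sup>2)"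
    unfolding block_op_def sum_scaleR_minus_const[OF S_props(2)] using S_props(1-3)
    by (intro norm_sq_sum_le_sum_norm_sq) (auto simp: less_imp_le)
  also have "\<dots> \<le> (\<Sum>t\<in>fst S. 10 ^ length t / snd S t * descent x (block_op T S x))"
  proof (rule sum_mono)
    fix t assume t: "t \<in> fst S"
    have "snd S t * (norm (string_op T t x - x))\<^sup>2 \<le> 1 * (norm (string_op T t x - x))\<^sup>2"
      using S_props(3,4)[OF t] by (intro mult_right_mono) auto
    then show "snd S t * (norm (string_op T t x - x))\<^sup>2 \<le> 10 ^ length t / snd S t * descent x (block_op T S x)"
      using string_op_displacement[OF S_props(5)[OF t] assms] string_op_weighted_bound[OF assms t]
      by linarith
  qed
  finally show ?thesis by (simp add: block_const_def sum_distrib_right)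
qed

lemma block_op_residual:
  assumes "x \<in> D" "i \<in> {1..m}"
  shows "(norm (x - T i x))\<^sup>2 \<le> block_const S * descent x (block_op T S x)"
proof -
  note S_props = calM_memberD[OF S]
  obtain t where t: "t \<in> fst S" "i \<in> set t" using S_props(6)[OF assms(2)] by blast
  have "(norm (x - T i x))\<^sup>2 \<le> 10 ^ length t * descent x (string_op T t x)"
    by (rule string_op_residual[OF S_props(5)[OF t(1)] assms(1) t(2)])
  also have "\<dots> \<le> 10 ^ length t / snd S t * descent x (block_op T S x)"
    by (rule string_op_weighted_bound[OF assms(1) t(1)])
  also have "\<dots> \<le> block_const S * descent x (block_op T S x)"
    unfolding block_const_def using S_props(1,3) t(1) block_op_descent_nonneg[OF assms(1)]
    by (intro mult_right_mono member_le_sum) (auto simp: less_imp_le)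
  finally show ?thesis .
qed

end

end

section \<open>The string-averaging Halpern iteration\<close>

locale string_averaged_halpern =
  fixes D :: "'a::{real_inner,complete_space} set" and T :: "nat \<Rightarrow> 'a \<Rightarrow> 'a" and m N :: nat
    and S :: "nat \<Rightarrow> nat list set \<times> (nat list \<Rightarrow> real)" and lam :: "nat \<Rightarrow> real"
    and u :: 'a and x :: "nat \<Rightarrow> 'a"
  assumes m_pos: "m \<ge> 1" and closed_D: "closed D" and convex_D: "convex D"
    and maps_D: "\<And>i. i \<in> {1..m} \<Longrightarrow> T i ` D \<subseteq> D"
    and firm: "\<And>i. i \<in> {1..m} \<Longrightarrow> firmly_nonexpansive_on D (T i)"
    and common_fixed_point: "(\<Inter>i\<in>{1..m}. Fix D (T i)) \<noteq> {}"
    and N_pos: "N \<ge> 1" and S_calM: "\<And>r. r \<in> {1..N} \<Longrightarrow> S r \<in> calM m"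
    and lam: "\<And>k. 0 \<le> lam k \<and> lam k \<le> 1" "lam \<longlonglongrightarrow> 0" "\<not> summable lam"
    and u_in_D: "u \<in> D" and x0_in_D: "x 0 \<in> D"
    and x_Suc: "\<And>k. x (Suc k) = lam k *\<^sub>R u + (1 - lam k) *\<^sub>R block_op T (S (k mod N + 1)) (x k)"
begin

abbreviation F :: "'a set" where "F \<equiv> \<Inter>i\<in>{1..m}. Fix D (T i)"

definition p :: 'a where "p = metric_proj F u"

lemma closed_F: "closed F"
  using firmly_nonexpansive_on_imp_nonexpansive firm
  by (intro closed_INT ballI closed_Fix_nonexpansive[OF closed_D]) blast

lemma convex_F: "convex F"
  using firmly_nonexpansive_on_imp_nonexpansive firm
  by (intro convex_INT ballI convex_Fix_nonexpansive[OF convex_D]) blast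

lemma p_in_F: "p \<in> F"
  unfolding p_def using metric_proj_nearest(1)[OF closed_F convex_F common_fixed_point] .

lemma p_variational_ineq: "q \<in> F \<Longrightarrow> inner (u - p) (q - p) \<le> 0"
  unfolding p_def by (rule metric_proj_inner_le[OF closed_F convex_F common_fixed_point])

sublocale firmly_nonexpansive_family D T m p
  using convex_D maps_D firm p_in_F m_pos unfolding Fix_def by unfold_locales auto

definition U :: "nat \<Rightarrow> 'a" where "U k = block_op T (S (k mod N + 1)) (x k)"

definition C :: real where "C = (\<Sum>r\<in>{1..N}. block_const (S r))"

definition R :: real where "R = max (norm (x 0 - p)) (norm (u - p))"

lemma x_Suc_U: "x (Suc k) = lam k *\<^sub>R u + (1 - lam k) *\<^sub>R U k"
  unfolding U_def by (rule x_Suc)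

lemma S_index_calM: "S (k mod N + 1) \<in> calM m"
  using N_pos by (intro S_calM) (simp add: Suc_leI)

lemma x_in_D: "x k \<in> D"
proof (induction k)
  case (Suc k)
  then have "U k \<in> D" unfolding U_def by (rule block_op_in_D[OF S_index_calM])
  then show ?case unfolding x_Suc_U using convex_D u_in_D lam(1)[of k] by (intro convexD) auto
qed (rule x0_in_D)

lemma descent_nonneg: "0 \<le> descent (x k) (U k)"
  unfolding U_def by (rule block_op_descent_nonneg[OF S_index_calM x_in_D])

lemma block_const_le_C: "block_const (S (k mod N + 1)) \<le> C"
proof -
  have "\<And>r. r \<in> {1..N} \<Longrightarrow> 0 \<le> block_const (S r)" using S_calM block_const_nonneg by blast
  then show ?thesis unfolding C_def using N_pos by (intro member_le_sum) (auto simp: Suc_leI)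
qed

lemma U_displacement: "(norm (U k - x k))\<^sup>2 \<le> C * descent (x k) (U k)"
proof -
  have "(norm (U k - x k))\<^sup>2 \<le> block_const (S (k mod N + 1)) * descent (x k) (U k)"
    unfolding U_def by (rule block_op_displacement[OF S_index_calM x_in_D])
  also have "\<dots> \<le> C * descent (x k) (U k)" by (rule mult_right_mono[OF block_const_le_C descent_nonneg])
  finally show ?thesis .
qed

lemma x_residual: "i \<in> {1..m} \<Longrightarrow> (norm (x k - T i (x k)))\<^sup>2 \<le> C * descent (x k) (U k)"
proof -
  assume "i \<in> {1..m}"
  then have "(norm (x k - T i (x k)))\<^sup>2 \<le> block_const (S (k mod N + 1)) * descent (x k) (U k)"
    unfolding U_def by (rule block_op_residual[OF S_index_calM x_in_D])
  also have "\<dots> \<le> C * descent (x k) (U k)" by (rule mult_right_mono[OF block_const_le_C descent_nonneg])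
  finally show ?thesis .
qed

lemma dist_U_le_dist_x: "norm (U k - p) \<le> norm (x k - p)"
proof (rule power2_le_imp_le)
  show "(norm (U k - p))\<^sup>2 \<le> (norm (x k - p))\<^sup>2"
    using descent_nonneg[of k] unfolding descent_def by linarith
qed simp

lemma dist_x_p_le_R: "norm (x k - p) \<le> R"
proof (induction k)
  case (Suc k)
  have "x (Suc k) - p = lam k *\<^sub>R (u - p) + (1 - lam k) *\<^sub>R (U k - p)"
    unfolding x_Suc_U by (simp add: algebra_simps)
  then have "norm (x (Suc k) - p) \<le> norm (lam k *\<^sub>R (u - p)) + norm ((1 - lam k) *\<^sub>R (U k - p))"
    by (metis norm_triangle_ineq)
  also have "\<dots> = lam k * norm (u - p) + (1 - lam k) * norm (U k - p)"
    using lam(1)[of k] by simp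
  also have "\<dots> \<le> lam k * R + (1 - lam k) * R"
    using lam(1)[of k] dist_U_le_dist_x[of k] Suc unfolding R_def by (intro add_mono mult_left_mono) auto
  finally show ?case by (simp add: algebra_simps)
qed (simp add: R_def)

lemma R_nonneg: "0 \<le> R"
  unfolding R_def by (simp add: le_max_iff_disj)

lemma dist_sq_recursion:
  "(norm (x (Suc k) - p))\<^sup>2
     \<le> (1 - lam k) * ((norm (x k - p))\<^sup>2 - descent (x k) (U k)) + 2 * lam k * inner (u - p) (x (Suc k) - p)"
proof -
  define a where "a = (1 - lam k) *\<^sub>R (U k - p)"
  define b where "b = lam k *\<^sub>R (u - p)"
  have ab: "x (Suc k) - p = a + b" unfolding a_def b_def x_Suc_U by (simp add: algebra_simps)
  have "(norm (a + b))\<^sup>2 = (norm a)\<^sup>2 + 2 * inner b (a + b) - (norm b)\<^sup>2"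
    unfolding power2_norm_eq_inner by (simp add: inner_add_left inner_add_right inner_commute)
  also have "(norm a)\<^sup>2 = (1 - lam k) * ((1 - lam k) * (norm (U k - p))\<^sup>2)"
    unfolding a_def using lam(1)[of k] by (simp add: power2_eq_square)
  also have "\<dots> \<le> (1 - lam k) * (norm (U k - p))\<^sup>2"
    using lam(1)[of k] by (intro mult_left_mono mult_left_le_one_le) auto
  finally have "(norm (a + b))\<^sup>2 \<le> (1 - lam k) * (norm (U k - p))\<^sup>2 + 2 * inner b (a + b)"
    using zero_le_power2[of "norm b"] by linarith
  then show ?thesis unfolding descent_def ab by (simp add: b_def)
qed

lemma x_step_le: "norm (x (Suc k) - x k) \<le> 2 * R * lam k + sqrt (C * descent (x k) (U k))"
proof -
  have "norm (u - U k) \<le> norm (u - p) + norm (U k - p)"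
    using norm_triangle_ineq4[of "u - p" "U k - p"] by simp
  then have "norm (u - U k) \<le> 2 * R"
    using dist_U_le_dist_x[of k] dist_x_p_le_R[of k] unfolding R_def by linarith
  then have "norm (lam k *\<^sub>R (u - U k)) \<le> 2 * R * lam k"
    using lam(1)[of k] by (simp add: mult_left_mono mult.commute)
  moreover have "norm (U k - x k) \<le> sqrt (C * descent (x k) (U k))"
    by (rule real_le_rsqrt) (rule U_displacement)
  moreover have "x (Suc k) - x k = lam k *\<^sub>R (u - U k) + (U k - x k)"
    unfolding x_Suc_U by (simp add: algebra_simps)
  then have "norm (x (Suc k) - x k) \<le> norm (lam k *\<^sub>R (u - U k)) + norm (U k - x k)"
    by (metis norm_triangle_ineq)
  ultimately show ?thesis by linarith
qed

lemma residual_after_step: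
  assumes "i \<in> {1..m}"
  shows "norm (x (Suc k) - T i (x (Suc k))) \<le> 4 * R * lam k + 3 * sqrt (C * descent (x k) (U k))"
proof -
  have "norm (x k - T i (x k)) \<le> sqrt (C * descent (x k) (U k))"
    by (rule real_le_rsqrt) (rule x_residual[OF assms])
  moreover have "norm (x (Suc k) - T i (x (Suc k))) \<le> 2 * norm (x (Suc k) - x k) + norm (x k - T i (x k))"
    by (rule nonexpansive_residual_le[OF nonexpansive[OF assms] x_in_D x_in_D])
  ultimately show ?thesis using x_step_le[of k] by linarith
qed

lemma residual_tendsto_0_along:
  assumes kk: "filterlim kk sequentially sequentially"
    and descent_0: "(\<lambda>n. descent (x (kk n)) (U (kk n))) \<longlonglongrightarrow> 0" and i: "i \<in> {1..m}"
  shows "(\<lambda>n. norm (x (Suc (kk n)) - T i (x (Suc (kk n))))) \<longlonglongrightarrow> 0"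
proof -
  define bound where "bound n = 4 * R * lam (kk n) + 3 * sqrt (C * descent (x (kk n)) (U (kk n)))" for n
  have "(\<lambda>n. lam (kk n)) \<longlonglongrightarrow> 0" using kk lam(2) by (rule filterlim_compose[rotated])
  then have "bound \<longlonglongrightarrow> 4 * R * 0 + 3 * sqrt (C * 0)"
    unfolding bound_def using descent_0 by (intro tendsto_intros)
  then have "bound \<longlonglongrightarrow> 0" by simp
  then show ?thesis
    by (rule Lim_null_comparison[OF always_eventually, rotated])
      (simp add: bound_def residual_after_step[OF i])
qed

lemma inner_small_if_descent_small:
  assumes "\<epsilon> > 0"
  shows "\<exists>\<eta>>0. \<forall>\<^sub>F k in sequentially. descent (x k) (U k) \<le> \<eta> \<longrightarrow> inner (u - p) (x (Suc k) - p) \<le> \<epsilon>"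
proof (rule ccontr)
  assume contra: "\<not> ?thesis"
  have "\<exists>k\<ge>n. descent (x k) (U k) \<le> 1 / Suc n \<and> inner (u - p) (x (Suc k) - p) > \<epsilon>" for n
  proof -
    have "1 / real (Suc n) > 0" by simp
    then have "\<not> (\<forall>\<^sub>F k in sequentially. descent (x k) (U k) \<le> 1 / Suc n \<longrightarrow> inner (u - p) (x (Suc k) - p) \<le> \<epsilon>)"
      using contra by blast
    then show ?thesis unfolding eventually_at_top_linorder by (meson not_le)
  qed
  then obtain kk where kk: "\<And>n. kk n \<ge> n" "\<And>n. descent (x (kk n)) (U (kk n)) \<le> 1 / Suc n"
    and far: "\<And>n. inner (u - p) (x (Suc (kk n)) - p) > \<epsilon>"
    by (metis (no_types) choice)
  define y where "y n = x (Suc (kk n))" for n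
  have "(\<lambda>n. 1 / real (Suc n)) \<longlonglongrightarrow> 0"
    using LIMSEQ_inverse_real_of_nat by (simp add: inverse_eq_divide)
  then have "(\<lambda>n. descent (x (kk n)) (U (kk n))) \<longlonglongrightarrow> 0"
    by (rule Lim_null_comparison[OF always_eventually, rotated]) (use kk(2) descent_nonneg in simp)
  moreover have "filterlim kk sequentially sequentially"
    by (rule filterlim_at_top_mono[OF filterlim_ident]) (use kk(1) in simp)
  ultimately have "(\<lambda>n. norm (y n - T i (y n))) \<longlonglongrightarrow> 0" if "i \<in> {1..m}" for i
    unfolding y_def using that by (intro residual_tendsto_0_along)
  moreover have "norm (y n) \<le> R + norm p" for n
    using dist_x_p_le_R[of "Suc (kk n)"] norm_triangle_ineq[of "y n - p" p] unfolding y_def by simp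
  moreover have "\<epsilon> + inner (u - p) p \<le> inner (u - p) (y n)" for n
    using far[of n] unfolding y_def by (simp add: inner_diff_right)
  moreover have "y n \<in> D" for n unfolding y_def by (rule x_in_D)
  ultimately have "\<exists>c \<in> F. \<epsilon> + inner (u - p) p \<le> inner (u - p) c"
    by (intro asymptotic_fixed_points_halfspace[OF closed_D convex_D nonexpansive])
  then obtain c where "c \<in> F" "\<epsilon> + inner (u - p) p \<le> inner (u - p) c" by blast
  then show False using p_variational_ineq[of c] \<open>\<epsilon> > 0\<close> by (simp add: inner_diff_right)
qed

lemma x_tendsto_p: "x \<longlonglongrightarrow> p"
proof -
  have "(\<lambda>k. (norm (x k - p))\<^sup>2) \<longlonglongrightarrow> 0"
  proof (rule halpern_real_sequence_tendsto_0[OF lam,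
        where d = "\<lambda>k. descent (x k) (U k)" and b = "\<lambda>k. inner (u - p) (x (Suc k) - p)"])
    show "(norm (x k - p))\<^sup>2 \<le> R\<^sup>2" for k
      using dist_x_p_le_R[of k] by (intro power_mono) auto
    show "inner (u - p) (x (Suc k) - p) \<le> R\<^sup>2" for k
    proof -
      have "inner (u - p) (x (Suc k) - p) \<le> norm (u - p) * norm (x (Suc k) - p)"
        by (rule norm_cauchy_schwarz)
      also have "\<dots> \<le> R * R"
        using dist_x_p_le_R[of "Suc k"] R_nonneg unfolding R_def by (intro mult_mono) auto
      finally show ?thesis by (simp add: power2_eq_square)
    qed
  qed (use descent_nonneg dist_sq_recursion inner_small_if_descent_small in auto)
  then have "(\<lambda>k. norm (x k - p)) \<longlonglongrightarrow> 0"
    using tendsto_real_sqrt by fastforce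
  then show ?thesis by (simp add: tendsto_norm_zero_iff LIM_zero_iff)
qed

end
theorem theorem4:
  fixes D :: "'a::{real_inner, complete_space} set"
    and T :: "nat \<Rightarrow> 'a \<Rightarrow> 'a"
    and m N :: nat
    and S :: "nat \<Rightarrow> nat list set \<times> (nat list \<Rightarrow> real)"
    and lam :: "nat \<Rightarrow> real"
    and u x0 :: 'a
    and x :: "nat \<Rightarrow> 'a"
  assumes "m \<ge> 1" and "D \<noteq> {}" and "closed D" and "convex D"
    and "\<And>i. i \<in> {1..m} \<Longrightarrow> T i ` D \<subseteq> D"
    and "\<And>i. i \<in> {1..m} \<Longrightarrow> firmly_nonexpansive_on D (T i)"
    and "(\<Inter>i\<in>{1..m}. Fix D (T i)) \<noteq> {}"
    and "N \<ge> 1"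
    and "inj_on S {1..N}"
    and "\<And>r. r \<in> {1..N} \<Longrightarrow> S r \<in> calM m"
    and "steering_sequence lam"
    and "u \<in> D" and "x0 \<in> D"
    and "x 0 = x0"
    and "\<And>k. x (Suc k) = lam k *\<^sub>R u + (1 - lam k) *\<^sub>R
           (\<Sum>t\<in>fst (S (k mod N + 1)). snd (S (k mod N + 1)) t *\<^sub>R string_op T t (x k))"
  shows "x \<longlonglongrightarrow> metric_proj (\<Inter>i\<in>{1..m}. Fix D (T i)) u"
proof -
  interpret string_averaged_halpern D T m N S lam u x
  proof
    show "\<And>k. 0 \<le> lam k \<and> lam k \<le> 1" "lam \<longlonglongrightarrow> 0" "\<not> summable lam"
      using assms(11) unfolding steering_sequence_def by auto
    show "x 0 \<in> D" using assms(13,14) by simp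
    show "x (Suc k) = lam k *\<^sub>R u + (1 - lam k) *\<^sub>R block_op T (S (k mod N + 1)) (x k)" for k
      unfolding block_op_def by (rule assms(15))
  qed (use assms in auto)
  show ?thesis using x_tendsto_p unfolding p_def .
qed

end
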